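(* Let $\{x_i\}_{i\in[N]}$ be the global solution of the delayed consensus system described in the context, let $\beta>0$, and let \[ F(t):=d_x(t)+\beta\int_{\max\{0,t-2\tau\}}^t e^{-(t-s)}\int_s^t\max_{i\in[N]}|\dot x_i(r)|\,\mathrm dr\,\mathrm ds,\qquad t\ge0. \] Let $K$ be the smallest integer such that $K\sigma\ge2\tau$. Then \[ F(t)\le\mathcal{Z}^K_\sigma\Delta^0_x\qquad\text{for all }t\in[0,2\tau], \] where $\mathcal{Z}^K_\sigma:=Z^K_\sigma+Z^{K-1}_\sigma\beta\big(1-(1+2\tau)e^{-2\tau}\big)$.
   Context: Let $N\ge2$, $d\ge1$ be integers, $[N]=\{1,\dots,N\}$, $0\le\sigma\le\tau$. Let $\psi:[0,\infty)\to[0,\infty)$ be continuous, nonincreasing, positive everywhere, with $\sup\psi\le1$. Given $x_i^0\in C([-\tau,0],\mathbb{R}^d)$, $\{x_i\}$ is the global solution (continuous on $[-\tau,\infty)$, continuously differentiable on $[0,\infty)$) of $\dot x_i(t)=\sum_{j\ne i}a_{ij}(t)(x_j(t-\tau)-x_i(t-\sigma))$ for $t>0$, with $a_{ij}(t)=\frac1{N-1}\psi(|x_i(t-\sigma)-x_j(t-\tau)|)$, and $x_i=x_i^0$ on $[-\tau,0]$. $d_x(t):=\max_{i,j}|x_i(t)-x_j(t)|$; $\Delta^0_x:=\max_{i,j}\max_{s,t\in[-\tau,0]}|x_i^0(s)-x_j^0(t)|$. For $k\ge0$, \[ Z^k_\sigma:=\frac{1}{2\sqrt{\sigma(1+\sigma)}}\Big[\big((1+\sigma)+\sqrt{\sigma(1+\sigma)}\big)^{k+1}-\big((1+\sigma)-\sqrt{\sigma(1+\sigma)}\big)^{k+1}\Big],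 \] a polynomial in $\sigma$; equivalently $Z^0_\sigma=1$, $Z^k_\sigma=1+(1+\sigma)Z^{k-1}_\sigma+\sigma\sum_{m=0}^{k-1}Z^m_\sigma$ for $k\ge1$. *)

theory Defs
  imports "HOL-Analysis.Analysis"
begin

text \<open>Z^k_sigma via the (equivalent) recursion; valid also at sigma = 0.\<close>
function Zs :: "real \<Rightarrow> nat \<Rightarrow> real" where
  "Zs \<sigma> 0 = 1"
| "Zs \<sigma> (Suc k) = 1 + (1 + \<sigma>) * Zs \<sigma> k + \<sigma> * (\<Sum>m\<in>{..k}. Zs \<sigma> m)"
  by pat_completeness auto
termination by (relation "Wellfounded.measure snd") auto

definition diam :: "nat \<Rightarrow> (nat \<Rightarrow> real \<Rightarrow> 'a::real_normed_vector) \<Rightarrow> real \<Rightarrow> real" where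
  "diam N x t = Max {norm (x i t - x j t) | i j. i \<in> {1..N} \<and> j \<in> {1..N}}"

definition Delta0 :: "nat \<Rightarrow> real \<Rightarrow> (nat \<Rightarrow> real \<Rightarrow> 'a::real_normed_vector) \<Rightarrow> real" where
  "Delta0 N \<tau> x = Sup {norm (x i s - x j t) | i j s t.
      i \<in> {1..N} \<and> j \<in> {1..N} \<and> s \<in> {-\<tau>..0} \<and> t \<in> {-\<tau>..0}}"

definition rhs :: "nat \<Rightarrow> real \<Rightarrow> real \<Rightarrow> (real \<Rightarrow> real) \<Rightarrow> (nat \<Rightarrow> real \<Rightarrow> 'a::real_normed_vector)
    \<Rightarrow> nat \<Rightarrow> real \<Rightarrow> 'a" where
  "rhs N \<sigma> \<tau> \<psi> x i t = (\<Sum>j\<in>{1..N} - {i}.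
      ((1 / (real N - 1)) * \<psi> (norm (x i (t - \<sigma>) - x j (t - \<tau>)))) *\<^sub>R (x j (t - \<tau>) - x i (t - \<sigma>)))"

definition Ffun :: "nat \<Rightarrow> real \<Rightarrow> real \<Rightarrow> (nat \<Rightarrow> real \<Rightarrow> 'a::real_normed_vector) \<Rightarrow> real \<Rightarrow> real" where
  "Ffun N \<tau> \<beta> x t = diam N x t + \<beta> * integral {max 0 (t - 2*\<tau>)..t}
      (\<lambda>s. exp (-(t - s)) * integral {s..t}
          (\<lambda>r. Max ((\<lambda>i. norm (vector_derivative (x i) (at r))) ` {1..N})))"

end

theory Submission
  imports Defs
begin

text \<open>
  Call the spread of the trajectories over a set of times \<open>I\<close> the largest distance
  \<open>|x_i(s) - x_j(r)|\<close> with \<open>s, r \<in> I\<close>; over \<open>[-\<tau>, 0]\<close> it is \<open>\<Delta>0\<close>. For \<open>t\<close> in the window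
  \<open>[k\<sigma>, (k + 1)\<sigma>]\<close> both delayed arguments \<open>t - \<sigma>\<close> and \<open>t - \<tau>\<close> lie in \<open>[-\<tau>, k\<sigma>]\<close>, and
  the right-hand side is a sum of \<open>N - 1\<close> differences of such positions with weights at
  most \<open>1/(N - 1)\<close>. So on the window every velocity is bounded by the spread over
  \<open>[-\<tau>, k\<sigma>]\<close>, every agent moves at most \<open>\<sigma>\<close> times that, and the spread grows by at most
  the factor \<open>1 + 2\<sigma>\<close>. Hence the spread over \<open>[-\<tau>, k\<sigma>]\<close> is at most
  \<open>(1 + 2\<sigma>)^k \<Delta>0 \<le> Z^k_\<sigma> \<Delta>0\<close>. On \<open>(0, t] \<subseteq> (0, K\<sigma>]\<close> the velocities are then bounded
  by \<open>C = Z^(K-1)_\<sigma> \<Delta>0\<close>, so the integral term of \<open>F(t)\<close> is at most \<open>C\<close> times the integral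
  of \<open>(t - s) exp (s - t)\<close> over \<open>[0, t]\<close>, that is \<open>C (1 - (1 + t) exp (-t))\<close>, which
  increases with \<open>t\<close>.
\<close>

lemma Zs_nonneg:
  assumes "0 \<le> \<sigma>"
  shows "0 \<le> Zs \<sigma> k"
proof (induction k rule: less_induct)
  case (less k)
  show ?case
  proof (cases k)
    case (Suc n)
    have "0 \<le> (\<Sum>m\<in>{..n}. Zs \<sigma> m)" using less Suc by (intro sum_nonneg) auto
    then show ?thesis using less Suc assms by simp
  qed simp
qed

lemma power_le_Zs:
  assumes "0 \<le> \<sigma>"
  shows "(1 + 2 * \<sigma>) ^ k \<le> Zs \<sigma> k"
proof (induction k)
  case (Suc k)
  have "Zs \<sigma> k \<le> (\<Sum>m\<in>{..k}. Zs \<sigma> m)"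
    using Zs_nonneg[OF assms] by (intro member_le_sum) auto
  then have "\<sigma> * Zs \<sigma> k \<le> \<sigma> * (\<Sum>m\<in>{..k}. Zs \<sigma> m)"
    using assms by (rule mult_left_mono)
  moreover have "(1 + 2 * \<sigma>) * (1 + 2 * \<sigma>) ^ k \<le> (1 + 2 * \<sigma>) * Zs \<sigma> k"
    using Suc assms by (intro mult_left_mono) auto
  ultimately show ?case by (simp add: algebra_simps)
qed simp

lemma norm_diff_le_of_vector_derivative_bound:
  fixes f :: "real \<Rightarrow> 'a::real_normed_vector"
  assumes "a \<le> b" and "continuous_on {a..b} f"
    and "\<And>s. a < s \<Longrightarrow> s < b \<Longrightarrow> (f has_vector_derivative f' s) (at s)"
    and "\<And>s. a < s \<Longrightarrow> s < b \<Longrightarrow> norm (f' s) \<le> C"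
  shows "norm (f b - f a) \<le> C * (b - a)"
proof (cases "a = b")
  case False
  then have "a < b" using assms(1) by simp
  have "((\<lambda>s. C * s) has_vector_derivative C) (at s)" for s
    unfolding has_real_derivative_iff_has_vector_derivative[symmetric]
    using DERIV_cmult[OF DERIV_ident, of C s] by simp
  then have "norm (f b - f a) \<le> C * b - C * a"
    using assms(3,4)
    by (intro differentiable_bound_general[OF \<open>a < b\<close> assms(2)]) (auto intro!: continuous_intros)
  then show ?thesis by (simp add: algebra_simps)
qed simp

definition spread_le :: "nat \<Rightarrow> (nat \<Rightarrow> real \<Rightarrow> 'a::real_normed_vector) \<Rightarrow> real set \<Rightarrow> real \<Rightarrow> bool" where
  "spread_le N x I C \<longleftrightarrow> (\<forall>i\<in>{1..N}. \<forall>j\<in>{1..N}. \<forall>s\<in>I. \<forall>r\<in>I. norm (x i s - x j r) \<le> C)"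

lemma spread_le_mono: "spread_le N x I C \<Longrightarrow> C \<le> C' \<Longrightarrow> spread_le N x I C'"
  unfolding spread_le_def by force

lemma spread_le_nonneg:
  assumes "spread_le N x I C" and "1 \<le> N" and "s \<in> I"
  shows "0 \<le> C"
  using assms unfolding spread_le_def by (metis atLeastAtMost_iff diff_self norm_zero order_refl)

lemma diam_le_if_spread_le:
  assumes "spread_le N x I C" and "1 \<le> N" and "t \<in> I"
  shows "diam N x t \<le> C"
proof -
  have "{norm (x i t - x j t) | i j. i \<in> {1..N} \<and> j \<in> {1..N}}
      = (\<lambda>(i, j). norm (x i t - x j t)) ` ({1..N} \<times> {1..N})"
    by force
  then show ?thesis
    using assms unfolding diam_def spread_le_def by (simp add: Max_le_iff)
qed

lemma spread_le_Delta0: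
  assumes "\<And>i. i \<in> {1..N} \<Longrightarrow> continuous_on {-\<tau>..0} (x i)"
  shows "spread_le N x {-\<tau>..0} (Delta0 N \<tau> x)"
proof -
  have "compact (\<Union>i\<in>{1..N}. x i ` {-\<tau>..0})"
    using assms by (intro compact_UN compact_continuous_image) auto
  then obtain B where "\<forall>y \<in> (\<Union>i\<in>{1..N}. x i ` {-\<tau>..0}). norm y \<le> B"
    using compact_imp_bounded bounded_iff by blast
  then have B: "norm (x i s) \<le> B" if "i \<in> {1..N}" "s \<in> {-\<tau>..0}" for i s
    using that by blast
  let ?D = "{norm (x i s - x j t) | i j s t.
      i \<in> {1..N} \<and> j \<in> {1..N} \<and> s \<in> {-\<tau>..0} \<and> t \<in> {-\<tau>..0}}"
  have "bdd_above ?D"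
  proof (rule bdd_aboveI)
    fix z assume "z \<in> ?D"
    then obtain i j s t where z: "z = norm (x i s - x j t)"
      and ij: "i \<in> {1..N}" "j \<in> {1..N}" and st: "s \<in> {-\<tau>..0}" "t \<in> {-\<tau>..0}"
      by blast
    have "norm (x i s - x j t) \<le> norm (x i s) + norm (x j t)" by (rule norm_triangle_ineq4)
    also have "\<dots> \<le> B + B" using B ij st by (intro add_mono) auto
    finally show "z \<le> B + B" using z by simp
  qed
  then show ?thesis
    unfolding spread_le_def Delta0_def by (intro ballI cSup_upper) blast+
qed

lemma norm_rhs_le:
  assumes N: "N \<ge> 2" and i: "i \<in> {1..N}"
    and psi_nonneg: "\<And>r. 0 \<le> r \<Longrightarrow> 0 \<le> \<psi> r" and psi_le1: "\<And>r. 0 \<le> r \<Longrightarrow> \<psi> r \<le> 1"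
    and C: "\<And>j. j \<in> {1..N} - {i} \<Longrightarrow> norm (x j (t - \<tau>) - x i (t - \<sigma>)) \<le> C"
  shows "norm (rhs N \<sigma> \<tau> \<psi> x i t) \<le> C"
proof -
  have N1: "real N - 1 > 0" using N by simp
  have "norm (rhs N \<sigma> \<tau> \<psi> x i t) \<le> (\<Sum>j\<in>{1..N} - {i}.
      norm ((\<psi> (norm (x i (t - \<sigma>) - x j (t - \<tau>))) / (real N - 1)) *\<^sub>R (x j (t - \<tau>) - x i (t - \<sigma>))))"
    unfolding rhs_def by (rule norm_sum[THEN order_trans]) simp
  also have "\<dots> \<le> (\<Sum>j\<in>{1..N} - {i}. C / (real N - 1))"
  proof (rule sum_mono)
    fix j assume j: "j \<in> {1..N} - {i}"
    let ?p = "\<psi> (norm (x i (t - \<sigma>) - x j (t - \<tau>)))"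
    have "?p * norm (x j (t - \<tau>) - x i (t - \<sigma>)) \<le> 1 * C"
      using psi_nonneg psi_le1 C[OF j] by (intro mult_mono) auto
    then show "norm ((?p / (real N - 1)) *\<^sub>R (x j (t - \<tau>) - x i (t - \<sigma>))) \<le> C / (real N - 1)"
      using psi_nonneg N1 by (simp add: divide_right_mono)
  qed
  also have "\<dots> = C"
    using i N1 by (simp add: of_nat_diff)
  finally show ?thesis .
qed

lemma norm_rhs_le_if_spread_le:
  assumes "N \<ge> 2" and "0 \<le> \<sigma>" and "\<sigma> \<le> \<tau>"
    and "\<And>r. 0 \<le> r \<Longrightarrow> 0 \<le> \<psi> r" and "\<And>r. 0 \<le> r \<Longrightarrow> \<psi> r \<le> 1"
    and "spread_le N x {-\<tau>..T} C" and "i \<in> {1..N}" and "0 \<le> t" and "t \<le> T + \<sigma>"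
  shows "norm (rhs N \<sigma> \<tau> \<psi> x i t) \<le> C"
  by (rule norm_rhs_le) (use assms in \<open>auto simp: spread_le_def\<close>)

lemma Max_norm_vector_derivative_le_if_spread_le:
  assumes N: "N \<ge> 2" and sig: "0 \<le> \<sigma>" "\<sigma> \<le> \<tau>"
    and psi: "\<And>r. 0 \<le> r \<Longrightarrow> 0 \<le> \<psi> r" "\<And>r. 0 \<le> r \<Longrightarrow> \<psi> r \<le> 1"
    and ode: "\<And>i t. i \<in> {1..N} \<Longrightarrow> 0 < t \<Longrightarrow>
                  (x i has_vector_derivative rhs N \<sigma> \<tau> \<psi> x i t) (at t)"
    and spread: "spread_le N x {-\<tau>..T} C" and t: "0 < t" "t \<le> T + \<sigma>"
  shows "Max ((\<lambda>i. norm (vector_derivative (x i) (at t))) ` {1..N}) \<le> C"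
proof -
  have "norm (vector_derivative (x i) (at t)) \<le> C" if i: "i \<in> {1..N}" for i
  proof -
    have "vector_derivative (x i) (at t) = rhs N \<sigma> \<tau> \<psi> x i t"
      using ode[OF i t(1)] by (rule vector_derivative_at)
    then show ?thesis
      using t by (simp add: norm_rhs_le_if_spread_le[OF N sig psi spread i])
  qed
  then show ?thesis using N by (simp add: Max_le_iff)
qed

lemma spread_le_step:
  assumes N: "N \<ge> 2" and sig: "0 \<le> \<sigma>" "\<sigma> \<le> \<tau>"
    and psi: "\<And>r. 0 \<le> r \<Longrightarrow> 0 \<le> \<psi> r" "\<And>r. 0 \<le> r \<Longrightarrow> \<psi> r \<le> 1"
    and T: "0 \<le> T"
    and cont: "\<And>i. i \<in> {1..N} \<Longrightarrow> continuous_on {-\<tau>..T + \<sigma>} (x i)"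
    and ode: "\<And>i t. i \<in> {1..N} \<Longrightarrow> T < t \<Longrightarrow> t < T + \<sigma> \<Longrightarrow>
                  (x i has_vector_derivative rhs N \<sigma> \<tau> \<psi> x i t) (at t)"
    and spread: "spread_le N x {-\<tau>..T} C"
  shows "spread_le N x {-\<tau>..T + \<sigma>} ((1 + 2 * \<sigma>) * C)"
proof -
  have C0: "0 \<le> C" using spread_le_nonneg[OF spread, where s=T] N T sig by simp
  have drift: "norm (x i s - x i (min s T)) \<le> \<sigma> * C"
    if i: "i \<in> {1..N}" and s: "s \<in> {-\<tau>..T + \<sigma>}" for i s
  proof -
    have "norm (x i s - x i (min s T)) \<le> C * (s - min s T)"
    proof (rule norm_diff_le_of_vector_derivative_bound)
      show "continuous_on {min s T..s} (x i)"
        by (rule continuous_on_subset[OF cont[OF i]]) (use s T sig in auto)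
      show "(x i has_vector_derivative rhs N \<sigma> \<tau> \<psi> x i t) (at t)"
        and "norm (rhs N \<sigma> \<tau> \<psi> x i t) \<le> C" if "min s T < t" "t < s" for t
        using that s ode[OF i] norm_rhs_le_if_spread_le[OF N sig psi spread i] T by auto
    qed simp
    also have "\<dots> \<le> C * \<sigma>"
      using C0 s sig by (intro mult_left_mono) auto
    finally show ?thesis by (simp add: mult.commute)
  qed
  show ?thesis
    unfolding spread_le_def
  proof (intro ballI)
    fix i j s r
    assume ij: "i \<in> {1..N}" "j \<in> {1..N}" and sr: "s \<in> {-\<tau>..T + \<sigma>}" "r \<in> {-\<tau>..T + \<sigma>}"
    have "norm (x i (min s T) - x j (min r T)) \<le> C"
      using spread ij sr sig T unfolding spread_le_def by auto
    then have "norm (x i s - x j r) \<le> \<sigma> * C + C + \<sigma> * C"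
      using drift[OF ij(1) sr(1)] drift[OF ij(2) sr(2)]
      by (metis norm_diff_triangle_le norm_minus_commute)
    then show "norm (x i s - x j r) \<le> (1 + 2 * \<sigma>) * C"
      by (simp add: algebra_simps)
  qed
qed

lemma spread_le_power:
  assumes N: "N \<ge> 2" and sig: "0 \<le> \<sigma>" "\<sigma> \<le> \<tau>"
    and psi: "\<And>r. 0 \<le> r \<Longrightarrow> 0 \<le> \<psi> r" "\<And>r. 0 \<le> r \<Longrightarrow> \<psi> r \<le> 1"
    and cont: "\<And>i. i \<in> {1..N} \<Longrightarrow> continuous_on {-\<tau>..} (x i)"
    and ode: "\<And>i t. i \<in> {1..N} \<Longrightarrow> 0 < t \<Longrightarrow>
                  (x i has_vector_derivative rhs N \<sigma> \<tau> \<psi> x i t) (at t)"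
    and spread: "spread_le N x {-\<tau>..0} \<Delta>"
  shows "spread_le N x {-\<tau>..real k * \<sigma>} ((1 + 2 * \<sigma>) ^ k * \<Delta>)"
proof (induction k)
  case (Suc k)
  have k0: "0 \<le> real k * \<sigma>" using sig by simp
  have "spread_le N x {-\<tau>..real k * \<sigma> + \<sigma>} ((1 + 2 * \<sigma>) * ((1 + 2 * \<sigma>) ^ k * \<Delta>))"
  proof (rule spread_le_step[OF N sig psi k0 _ _ Suc.IH])
    show "continuous_on {-\<tau>..real k * \<sigma> + \<sigma>} (x i)" if "i \<in> {1..N}" for i
      using cont[OF that] by (rule continuous_on_subset) auto
    show "(x i has_vector_derivative rhs N \<sigma> \<tau> \<psi> x i t) (at t)"
      if "i \<in> {1..N}" "real k * \<sigma> < t" "t < real k * \<sigma> + \<sigma>" for i t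
      by (rule ode[OF that(1)]) (use k0 that in linarith)
  qed
  then show ?case by (simp add: algebra_simps)
qed (use spread in simp)

lemma one_plus_mult_exp_neg_antimono:
  fixes t T :: real
  assumes "0 \<le> t" and "t \<le> T"
  shows "(1 + T) * exp (-T) \<le> (1 + t) * exp (-t)"
proof (rule DERIV_nonpos_imp_nonincreasing[OF assms(2)])
  fix u assume "t \<le> u" "u \<le> T"
  have "((\<lambda>u. (1 + u) * exp (-u)) has_real_derivative - u * exp (-u)) (at u)"
    by (auto intro!: derivative_eq_intros simp: algebra_simps)
  then show "\<exists>y. ((\<lambda>u. (1 + u) * exp (-u)) has_real_derivative y) (at u) \<and> y \<le> 0"
    using \<open>t \<le> u\<close> assms(1) by auto
qed

lemma has_integral_mult_exp_neg:
  fixes t :: real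
  assumes "0 \<le> t"
  shows "((\<lambda>s. (t - s) * exp (-(t - s))) has_integral 1 - (1 + t) * exp (-t)) {0..t}"
proof -
  have "((\<lambda>s. (t - s) * exp (-(t - s))) has_integral
      (1 + t - t) * exp (-(t - t)) - (1 + t - 0) * exp (-(t - 0))) {0..t}"
  proof (rule fundamental_theorem_of_calculus[OF assms])
    fix s :: real
    have "((\<lambda>s. (1 + t - s) * exp (-(t - s))) has_real_derivative (t - s) * exp (-(t - s))) (at s)"
      by (auto intro!: derivative_eq_intros simp: algebra_simps)
    then show "((\<lambda>s. (1 + t - s) * exp (-(t - s))) has_vector_derivative (t - s) * exp (-(t - s)))
        (at s within {0..t})"
      by (simp add: has_real_derivative_iff_has_vector_derivative has_vector_derivative_at_within)
  qed
  then show ?thesis by simp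
qed

lemma integral_le_bound_times_length:
  fixes M :: "real \<Rightarrow> real"
  assumes "s \<le> t" and "0 \<le> C" and "\<And>r. s < r \<Longrightarrow> r \<le> t \<Longrightarrow> M r \<le> C"
  shows "integral {s..t} M \<le> C * (t - s)"
proof (cases "M integrable_on {s..t}")
  case True
  let ?M = "\<lambda>r. if r = s then C else M r"
  have "integral {s..t} M = integral {s..t} ?M"
    by (rule integral_spike[of "{s}"]) auto
  also have "\<dots> \<le> integral {s..t} (\<lambda>_. C)"
    by (rule integral_le[OF integrable_spike[OF True, of "{s}"]]) (use assms in auto)
  finally show ?thesis using assms(1) by (simp add: mult.commute)
qed (use assms in \<open>simp add: not_integrable_integral\<close>)

lemma exp_weighted_double_integral_le:
  fixes M :: "real \<Rightarrow> real"
  assumes C: "0 \<le> C" and t: "0 \<le> t" "t \<le> T" and M: "\<And>r. 0 < r \<Longrightarrow> r \<le> t \<Longrightarrow> M r \<le> C"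
  shows "integral {0..t} (\<lambda>s. exp (-(t - s)) * integral {s..t} M) \<le> C * (1 - (1 + T) * exp (-T))"
proof (cases "(\<lambda>s. exp (-(t - s)) * integral {s..t} M) integrable_on {0..t}")
  case True
  have majorant: "((\<lambda>s. C * ((t - s) * exp (-(t - s)))) has_integral C * (1 - (1 + t) * exp (-t))) {0..t}"
    using has_integral_mult_right[OF has_integral_mult_exp_neg[OF t(1)]] .
  have "integral {0..t} (\<lambda>s. exp (-(t - s)) * integral {s..t} M)
      \<le> integral {0..t} (\<lambda>s. C * ((t - s) * exp (-(t - s))))"
  proof (rule integral_le[OF True has_integral_integrable[OF majorant]])
    fix s assume "s \<in> {0..t}"
    then have "exp (-(t - s)) * integral {s..t} M \<le> exp (-(t - s)) * (C * (t - s))"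
      using integral_le_bound_times_length[of s t C M] C M by (intro mult_left_mono) auto
    then show "exp (-(t - s)) * integral {s..t} M \<le> C * ((t - s) * exp (-(t - s)))"
      by (simp add: algebra_simps)
  qed
  also have "\<dots> = C * (1 - (1 + t) * exp (-t))"
    using majorant by (rule integral_unique)
  also have "\<dots> \<le> C * (1 - (1 + T) * exp (-T))"
    using one_plus_mult_exp_neg_antimono[OF t] C by (intro mult_left_mono) auto
  finally show ?thesis .
next
  case False
  \<comment> \<open>a non-integrable function has integral \<open>0\<close>\<close>
  then show ?thesis
    using one_plus_mult_exp_neg_antimono[of 0 T] t C by (simp add: not_integrable_integral)
qed

theorem lemma3p7:
  fixes N K :: nat and \<sigma> \<tau> \<beta> t :: real and \<psi> :: "real \<Rightarrow> real"
    and x :: "nat \<Rightarrow> real \<Rightarrow> 'a::euclidean_space"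
  assumes N: "N \<ge> 2"
    and sig: "0 \<le> \<sigma>" "\<sigma> \<le> \<tau>"
    and psi_cont: "continuous_on {0..} \<psi>"
    and psi_mono: "\<And>a b. 0 \<le> a \<Longrightarrow> a \<le> b \<Longrightarrow> \<psi> b \<le> \<psi> a"
    and psi_pos: "\<And>r. 0 \<le> r \<Longrightarrow> 0 < \<psi> r"
    and psi_le1: "\<And>r. 0 \<le> r \<Longrightarrow> \<psi> r \<le> 1"
    and x_cont: "\<And>i. i \<in> {1..N} \<Longrightarrow> continuous_on {-\<tau>..} (x i)"
    and x_ode: "\<And>i t. i \<in> {1..N} \<Longrightarrow> 0 < t \<Longrightarrow>
                  (x i has_vector_derivative rhs N \<sigma> \<tau> \<psi> x i t) (at t)"
    and x_C1: "\<And>i. i \<in> {1..N} \<Longrightarrow>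
                  continuous_on {0..} (\<lambda>t. vector_derivative (x i) (at t within {0..}))"
    and beta: "\<beta> > 0"
    and K: "real K * \<sigma> \<ge> 2 * \<tau>" "\<And>k. k < K \<Longrightarrow> real k * \<sigma> < 2 * \<tau>"
    and t: "t \<in> {0..2*\<tau>}"
  shows "Ffun N \<tau> \<beta> x t
           \<le> (Zs \<sigma> K + Zs \<sigma> (K - 1) * \<beta> * (1 - (1 + 2*\<tau>) * exp (-(2*\<tau>)))) * Delta0 N \<tau> x"
proof -
  define \<Delta> where "\<Delta> = Delta0 N \<tau> x"
  define c where "c = 1 - (1 + 2 * \<tau>) * exp (-(2 * \<tau>))"
  have psi_nonneg: "\<And>r. 0 \<le> r \<Longrightarrow> 0 \<le> \<psi> r" using psi_pos less_imp_le by blast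
  have spread0: "spread_le N x {-\<tau>..0} \<Delta>"
    unfolding \<Delta>_def by (intro spread_le_Delta0) (auto intro: continuous_on_subset[OF x_cont])
  have \<Delta>0: "0 \<le> \<Delta>" using spread_le_nonneg[OF spread0, where s=0] N sig by simp
  have spread: "spread_le N x {-\<tau>..real k * \<sigma>} (Zs \<sigma> k * \<Delta>)" for k
    using spread_le_power[OF N sig psi_nonneg psi_le1 x_cont x_ode spread0, of k]
      power_le_Zs[OF sig(1), of k] \<Delta>0 by (auto intro: spread_le_mono mult_right_mono)
  have diam: "diam N x t \<le> Zs \<sigma> K * \<Delta>"
    using diam_le_if_spread_le[OF spread[of K]] N sig K(1) t by auto
  have "integral {0..t} (\<lambda>s. exp (-(t - s)) * integral {s..t}
      (\<lambda>r. Max ((\<lambda>i. norm (vector_derivative (x i) (at r))) ` {1..N})))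
      \<le> Zs \<sigma> (K - 1) * \<Delta> * c"
    unfolding c_def
  proof (rule exp_weighted_double_integral_le)
    fix r assume r: "0 < r" "r \<le> t"
    then have "K \<noteq> 0" using K(1) t by (intro notI) simp
    then have "r \<le> real (K - 1) * \<sigma> + \<sigma>" using K(1) t r by (simp add: of_nat_diff algebra_simps)
    then show "Max ((\<lambda>i. norm (vector_derivative (x i) (at r))) ` {1..N}) \<le> Zs \<sigma> (K - 1) * \<Delta>"
      using r by (intro Max_norm_vector_derivative_le_if_spread_le[OF N sig psi_nonneg psi_le1 x_ode spread])
  qed (use t \<Delta>0 Zs_nonneg[OF sig(1)] in auto)
  moreover have "max 0 (t - 2 * \<tau>) = 0" using t by simp
  ultimately have "Ffun N \<tau> \<beta> x t \<le> Zs \<sigma> K * \<Delta> + \<beta> * (Zs \<sigma> (K - 1) * \<Delta> * c)"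
    unfolding Ffun_def using diam beta by (intro add_mono mult_left_mono) auto
  then show ?thesis unfolding \<Delta>_def c_def by (simp add: algebra_simps)
qed

end
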